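(* Let $(H;\langle\cdot,\cdot\rangle)$ be a real inner product space with norm $\|\cdot\|$, and let $a,b,x,y\in H\setminus\{0\}$. (i) If there exist $\delta_1,\delta_2\in(0,1]$ with $\delta_1+\delta_2\ge 1$ such that $$\frac{\langle x,a\rangle}{\|x\|\,\|a\|}\ge\delta_1,\qquad \frac{\langle y,a\rangle}{\|y\|\,\|a\|}\ge\delta_2,$$ then $$\frac{\langle x,y\rangle}{\|x\|\,\|y\|}\ge \frac12(\delta_1+\delta_2)^2-\frac32\qquad(\ge -1).$$ (ii) If there exists $\mu_1\in\mathbb{R}$ with $0\le\mu_1\le 1$ such that $\mu_1\|a\|\,\|b\|\le \dfrac{\langle x,a\rangle\langle x,b\rangle}{\|x\|^2}$, then $$-1\le 2\mu_1-1\le \frac{\langle a,b\rangle}{\|a\|\,\|b\|}.$$ If there exists $\mu_2\in\mathbb{R}$ with $-1\le\mu_2\le 0$ such that $\dfrac{\langle x,a\rangle\langle x,b\rangle}{\|x\|^2}\le \mu_2\|a\|\,\|b\|$, then $$\frac{\langle a,b\rangle}{\|a\|\,\|b\|}\le 2\mu_2+1\le 1.$$ *)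

theory Defs
  imports "HOL-Analysis.Analysis"
begin

end

theory Submission
  imports Defs
begin

text \<open>Normalising, all the cosines become inner products of unit vectors.
  For (i), Cauchy--Schwarz against the unit vector \<open>a\<close> gives
  \<open>\<langle>x + y, a\<rangle>\<^sup>2 \<le> \<parallel>x + y\<parallel>\<^sup>2 = 2 + 2\<langle>x, y\<rangle>\<close>.
  For (ii), the reflection \<open>2\<langle>x, a\<rangle>x - a\<close> of \<open>a\<close> in the line through \<open>x\<close> is again
  a unit vector, and its inner product with \<open>b\<close> is \<open>2\<langle>x, a\<rangle>\<langle>x, b\<rangle> - \<langle>a, b\<rangle>\<close>,
  which Cauchy--Schwarz bounds by \<open>1\<close> in absolute value.
  The argument for (i) gives the sharper constant \<open>-1\<close> in place of \<open>-3/2\<close>.\<close>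

lemma inner_sgn_sgn:
  fixes x y :: "'a :: real_inner"
  shows "inner (sgn x) (sgn y) = inner x y / (norm x * norm y)"
  by (simp add: sgn_div_norm divide_inverse inner_scaleR_left inner_scaleR_right mult.commute)

lemma power2_norm_add_units:
  fixes u v :: "'a :: real_inner"
  assumes "norm u = 1" "norm v = 1"
  shows "(norm (u + v))\<^sup>2 = 2 + 2 * inner u v"
proof -
  have "inner u u = 1" "inner v v = 1"
    using assms by (simp_all add: norm_eq_1)
  then show ?thesis
    by (simp add: power2_norm_eq_inner inner_add_left inner_add_right inner_commute)
qed

lemma power2_inner_add_le_unit:
  fixes u v e :: "'a :: real_inner"
  assumes "norm u = 1" "norm v = 1" "norm e = 1"
  shows "(inner u e + inner v e)\<^sup>2 \<le> 2 + 2 * inner u v"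
proof -
  have "\<bar>inner (u + v) e\<bar> \<le> norm (u + v)"
    using Cauchy_Schwarz_ineq2[of "u + v" e] assms(3) by simp
  then have "(inner (u + v) e)\<^sup>2 \<le> (norm (u + v))\<^sup>2"
    by (metis abs_le_square_iff abs_norm_cancel)
  then show ?thesis
    using power2_norm_add_units[OF assms(1,2)] by (simp add: inner_add_left)
qed

lemma norm_reflect_line:
  fixes u e :: "'a :: real_inner"
  assumes "norm u = 1"
  shows "norm ((2 * inner u e) *\<^sub>R u - e) = norm e"
proof -
  have "inner u u = 1"
    using assms by (simp add: norm_eq_1)
  then have "inner ((2 * inner u e) *\<^sub>R u - e) ((2 * inner u e) *\<^sub>R u - e) = inner e e"
    by (simp add: inner_diff_left inner_diff_right inner_commute algebra_simps)
  then show ?thesis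
    by (simp add: norm_eq_sqrt_inner)
qed

lemma abs_inner_reflect_le_unit:
  fixes u e f :: "'a :: real_inner"
  assumes "norm u = 1"
  shows "\<bar>2 * inner u e * inner u f - inner e f\<bar> \<le> norm e * norm f"
proof -
  have "inner ((2 * inner u e) *\<^sub>R u - e) f = 2 * inner u e * inner u f - inner e f"
    by (simp add: inner_diff_left)
  then show ?thesis
    using Cauchy_Schwarz_ineq2[of "(2 * inner u e) *\<^sub>R u - e" f] norm_reflect_line[OF assms]
    by simp
qed

lemma cosine_ge_power2_cosine_sum:
  fixes x y a :: "'a :: real_inner"
  assumes "x \<noteq> 0" "y \<noteq> 0" "a \<noteq> 0"
  shows "(inner x a / (norm x * norm a) + inner y a / (norm y * norm a))\<^sup>2 / 2 - 1
           \<le> inner x y / (norm x * norm y)"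
  using power2_inner_add_le_unit[of "sgn x" "sgn y" "sgn a"] assms
  by (simp add: norm_sgn inner_sgn_sgn)

lemma abs_inner_reflect_le:
  fixes x a b :: "'a :: real_inner"
  shows "\<bar>2 * (inner x a * inner x b / (norm x)\<^sup>2) - inner a b\<bar> \<le> norm a * norm b"
proof (cases "x = 0")
  case True
  then show ?thesis
    using Cauchy_Schwarz_ineq2[of a b] by simp
next
  case False
  have "inner (sgn x) a * inner (sgn x) b = inner x a * inner x b / (norm x)\<^sup>2"
    by (simp add: sgn_div_norm power2_eq_square field_simps)
  then show ?thesis
    using abs_inner_reflect_le_unit[of "sgn x" a b] False by (simp add: norm_sgn mult.assoc)
qed

lemma cosine_ge_of_projection_product_ge:
  fixes x a b :: "'a :: real_inner"
  assumes "a \<noteq> 0" "b \<noteq> 0"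
    and \<mu>: "\<mu> * norm a * norm b \<le> inner x a * inner x b / (norm x)\<^sup>2"
  shows "2 * \<mu> - 1 \<le> inner a b / (norm a * norm b)"
proof -
  have "(2 * \<mu> - 1) * (norm a * norm b) = 2 * (\<mu> * norm a * norm b) - norm a * norm b"
    by (simp add: algebra_simps)
  also have "\<dots> \<le> inner a b"
    using \<mu> abs_inner_reflect_le[of x a b] by linarith
  finally show ?thesis
    using assms by (simp add: pos_le_divide_eq)
qed

lemma cosine_le_of_projection_product_le:
  fixes x a b :: "'a :: real_inner"
  assumes "a \<noteq> 0" "b \<noteq> 0"
    and \<mu>: "inner x a * inner x b / (norm x)\<^sup>2 \<le> \<mu> * norm a * norm b"
  shows "inner a b / (norm a * norm b) \<le> 2 * \<mu> + 1"
proof -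
  have "inner a b \<le> 2 * (\<mu> * norm a * norm b) + norm a * norm b"
    using \<mu> abs_inner_reflect_le[of x a b] by linarith
  also have "\<dots> = (2 * \<mu> + 1) * (norm a * norm b)"
    by (simp add: algebra_simps)
  finally show ?thesis
    using assms by (simp add: pos_divide_le_eq)
qed

theorem theorem1p5:
  fixes a b x y :: "'a :: real_inner"
  assumes "a \<noteq> 0" and "b \<noteq> 0" and "x \<noteq> 0" and "y \<noteq> 0"
  shows "(\<forall>\<delta>1 \<delta>2 :: real.
            \<delta>1 \<in> {0<..1} \<and> \<delta>2 \<in> {0<..1} \<and> \<delta>1 + \<delta>2 \<ge> 1 \<and>
            inner x a / (norm x * norm a) \<ge> \<delta>1 \<and>
            inner y a / (norm y * norm a) \<ge> \<delta>2 \<longrightarrow>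
              inner x y / (norm x * norm y) \<ge> (\<delta>1 + \<delta>2)^2 / 2 - 3/2 \<and>
              (\<delta>1 + \<delta>2)^2 / 2 - 3/2 \<ge> -1)
       \<and> (\<forall>\<mu>1 :: real. 0 \<le> \<mu>1 \<and> \<mu>1 \<le> 1 \<and>
            \<mu>1 * norm a * norm b \<le> inner x a * inner x b / (norm x)^2 \<longrightarrow>
              -1 \<le> 2 * \<mu>1 - 1 \<and> 2 * \<mu>1 - 1 \<le> inner a b / (norm a * norm b))
       \<and> (\<forall>\<mu>2 :: real. -1 \<le> \<mu>2 \<and> \<mu>2 \<le> 0 \<and>
            inner x a * inner x b / (norm x)^2 \<le> \<mu>2 * norm a * norm b \<longrightarrow>
              inner a b / (norm a * norm b) \<le> 2 * \<mu>2 + 1 \<and> 2 * \<mu>2 + 1 \<le> 1)"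
proof (intro conjI allI impI)
  fix \<delta>1 \<delta>2 :: real
  assume \<delta>: "\<delta>1 \<in> {0<..1} \<and> \<delta>2 \<in> {0<..1} \<and> \<delta>1 + \<delta>2 \<ge> 1 \<and>
    inner x a / (norm x * norm a) \<ge> \<delta>1 \<and> inner y a / (norm y * norm a) \<ge> \<delta>2"
  then have "(\<delta>1 + \<delta>2)\<^sup>2 \<le> (inner x a / (norm x * norm a) + inner y a / (norm y * norm a))\<^sup>2"
    by (intro power_mono) auto
  then show "inner x y / (norm x * norm y) \<ge> (\<delta>1 + \<delta>2)^2 / 2 - 3/2"
    using cosine_ge_power2_cosine_sum[OF assms(3,4,1)] by linarith
  have "1 \<le> (\<delta>1 + \<delta>2)\<^sup>2"
    using \<delta> one_le_power[of "\<delta>1 + \<delta>2" 2] by simp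
  then show "(\<delta>1 + \<delta>2)^2 / 2 - 3/2 \<ge> -1"
    by simp
next
  fix \<mu>1 :: real
  assume "0 \<le> \<mu>1 \<and> \<mu>1 \<le> 1 \<and> \<mu>1 * norm a * norm b \<le> inner x a * inner x b / (norm x)^2"
  then show "-1 \<le> 2 * \<mu>1 - 1" and "2 * \<mu>1 - 1 \<le> inner a b / (norm a * norm b)"
    using cosine_ge_of_projection_product_ge[OF assms(1,2)] by auto
next
  fix \<mu>2 :: real
  assume "-1 \<le> \<mu>2 \<and> \<mu>2 \<le> 0 \<and> inner x a * inner x b / (norm x)^2 \<le> \<mu>2 * norm a * norm b"
  then show "inner a b / (norm a * norm b) \<le> 2 * \<mu>2 + 1" and "2 * \<mu>2 + 1 \<le> 1"
    using cosine_le_of_projection_product_le[OF assms(1,2)] by auto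
qed

end
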